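(* Let $I\subseteq\mathbb{R}$ be an interval, let $f:I\to\mathbb{R}$ be differentiable on the interior $I^{\circ}$, let $a,b\in I^{\circ}$ with $a<b$, assume $f'\in L[a,b]$, and let $\alpha,\lambda\in[0,1]$. Suppose that $|f'|^{q}$ is $s$-convex on $[a,b]$ for some fixed $s\in(0,1]$ and some $q>1$, and let $p$ satisfy $\frac1p+\frac1q=1$. Define $$I_f(\lambda,\alpha,a,b)=\lambda\big(\alpha f(a)+(1-\alpha)f(b)\big)+(1-\lambda)f(\alpha a+(1-\alpha)b)-\frac{1}{b-a}\int_a^b f(x)\,dx,$$ $$C_f(\alpha,q)=(1-\alpha)\big[|f'((1-\alpha)b+\alpha a)|^q+|f'(a)|^q\big],\qquad D_f(\alpha,q)=\alpha\big[|f'((1-\alpha)b+\alpha a)|^q+|f'(b)|^q\big],$$ $$\varepsilon_1(\alpha,\lambda,p)=(\alpha\lambda)^{p+1}+(1-\alpha-\alpha\lambda)^{p+1},\qquad \varepsilon_2(\alpha,\lambda,p)=(\alpha\lambda)^{p+1}-(\alpha\lambda-1+\alpha)^{p+1}.$$ Then $|I_f(\lambda,\alpha,a,b)|\leq (b-a)\left(\frac{1}{p+1}\right)^{1/p}\left(\frac{1}{s+1}\right)^{1/q}\cdot K$, where $K=\varepsilon_1^{1/p}(\alpha,\lambda,p)C_f^{1/q}(\alpha,q)+\varepsilon_1^{1/p}(1-\alpha,\lambda,p)D_f^{1/q}(\alpha,q)$ if $\alpha\lambda\leq 1-\alpha\leq 1-\lambda(1-\alpha)$; $K=\varepsilon_1^{1/p}(\alpha,\lambda,p)C_f^{1/q}(\alpha,q)+\varepsilon_2^{1/p}(1-\alpha,\lambda,p)D_f^{1/q}(\alpha,q)$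 if $\alpha\lambda\leq 1-\lambda(1-\alpha)\leq 1-\alpha$; $K=\varepsilon_2^{1/p}(\alpha,\lambda,p)C_f^{1/q}(\alpha,q)+\varepsilon_1^{1/p}(1-\alpha,\lambda,p)D_f^{1/q}(\alpha,q)$ if $1-\alpha\leq\alpha\lambda\leq 1-\lambda(1-\alpha)$.
   Context: For a fixed $s\in(0,1]$, a function $g:[a,b]\to[0,\infty)$ is called $s$-convex (in the second sense) on $[a,b]$ if $g(\theta x+(1-\theta)y)\leq \theta^{s}g(x)+(1-\theta)^{s}g(y)$ for all $x,y\in[a,b]$ and all $\theta\in[0,1]$. *)

theory Defs
  imports "HOL-Analysis.Analysis"
begin

text \<open>s-convexity in the second sense on [a,b] (nonnegative function).\<close>
definition s_convex_on :: "real \<Rightarrow> (real \<Rightarrow> real) \<Rightarrow> real \<Rightarrow> real \<Rightarrow> bool" where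
  "s_convex_on s g a b \<longleftrightarrow>
     (\<forall>x\<in>{a..b}. 0 \<le> g x) \<and>
     (\<forall>x\<in>{a..b}. \<forall>y\<in>{a..b}. \<forall>\<theta>\<in>{0..1}.
        g (\<theta> * x + (1 - \<theta>) * y) \<le> \<theta> powr s * g x + (1 - \<theta>) powr s * g y)"

definition I_f :: "(real \<Rightarrow> real) \<Rightarrow> real \<Rightarrow> real \<Rightarrow> real \<Rightarrow> real \<Rightarrow> real" where
  "I_f f lam \<alpha> a b =
     lam * (\<alpha> * f a + (1 - \<alpha>) * f b) + (1 - lam) * f (\<alpha> * a + (1 - \<alpha>) * b)
     - (1 / (b - a)) * integral {a..b} f"

definition C_f :: "(real \<Rightarrow> real) \<Rightarrow> real \<Rightarrow> real \<Rightarrow> real \<Rightarrow> real \<Rightarrow> real" where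
  "C_f f' a b \<alpha> q = (1 - \<alpha>) * (\<bar>f' ((1 - \<alpha>) * b + \<alpha> * a)\<bar> powr q + \<bar>f' a\<bar> powr q)"

definition D_f :: "(real \<Rightarrow> real) \<Rightarrow> real \<Rightarrow> real \<Rightarrow> real \<Rightarrow> real \<Rightarrow> real" where
  "D_f f' a b \<alpha> q = \<alpha> * (\<bar>f' ((1 - \<alpha>) * b + \<alpha> * a)\<bar> powr q + \<bar>f' b\<bar> powr q)"

definition eps1 :: "real \<Rightarrow> real \<Rightarrow> real \<Rightarrow> real" where
  "eps1 \<alpha> lam p = (\<alpha> * lam) powr (p + 1) + (1 - \<alpha> - \<alpha> * lam) powr (p + 1)"

definition eps2 :: "real \<Rightarrow> real \<Rightarrow> real \<Rightarrow> real" where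
  "eps2 \<alpha> lam p = (\<alpha> * lam) powr (p + 1) - (\<alpha> * lam - 1 + \<alpha>) powr (p + 1)"

end

theory Submission
  imports Defs
begin

text \<open>With \<open>c = \<alpha> a + (1 - \<alpha>) b\<close>, \<open>m\<^sub>1 = a + \<alpha> \<lambda> (b - a)\<close> and \<open>m\<^sub>2 = b - \<lambda> (1 - \<alpha>) (b - a)\<close>,
  integration by parts gives
  \<open>(b - a) I\<^sub>f = \<integral>\<^sub>a\<^sup>c (x - m\<^sub>1) f'(x) dx + \<integral>\<^sub>c\<^sup>b (x - m\<^sub>2) f'(x) dx\<close>.
  H\<ouml>lder's inequality bounds each integral by \<open>(\<integral> |x - m|^p)^(1/p) (\<integral> |f'|^q)^(1/q)\<close>.
  The first factor is computed exactly; it yields \<open>\<epsilon>\<^sub>1\<close> or \<open>\<epsilon>\<^sub>2\<close> according to whether the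
  centre \<open>m\<close> lies inside the interval of integration or beyond its far end, which is where
  the three cases come from. The second factor is controlled by the Hadamard-type inequality
  \<open>\<integral>\<^sub>u\<^sup>v g \<le> (v - u) (g u + g v) / (s + 1)\<close> for the s-convex function \<open>g = |f'|\<^sup>q\<close>.\<close>

lemma has_integral_powr_sub_left:
  fixes m u v e :: real
  assumes "m \<le> u" "u \<le> v" "-1 < e"
  shows "((\<lambda>x. (x - m) powr e) has_integral ((v - m) powr (e + 1) - (u - m) powr (e + 1)) / (e + 1)) {u..v}"
proof -
  let ?F = "\<lambda>x. (x - m) powr (e + 1) / (e + 1)"
  have "((\<lambda>x. (x - m) powr e) has_integral ?F v - ?F u) {u..v}"
  proof (rule fundamental_theorem_of_calculus_interior[OF assms(2)])
    show "continuous_on {u..v} ?F"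
      using assms by (intro continuous_intros continuous_on_powr') auto
  next
    fix x assume "x \<in> {u<..<v}"
    then have "0 < x - m" using assms by auto
    then have "(?F has_real_derivative (e + 1) * (x - m) powr (e + 1 - 1) * 1 / (e + 1)) (at x)"
      by (intro DERIV_cdivide DERIV_fun_powr[simplified] derivative_eq_intros) auto
    then show "(?F has_vector_derivative (x - m) powr e) (at x)"
      using assms by (simp add: has_real_derivative_iff_has_vector_derivative[symmetric])
  qed
  then show ?thesis by (simp add: diff_divide_distrib)
qed

lemma has_integral_powr_sub_right:
  fixes m u v e :: real
  assumes "v \<le> m" "u \<le> v" "-1 < e"
  shows "((\<lambda>x. (m - x) powr e) has_integral ((m - u) powr (e + 1) - (m - v) powr (e + 1)) / (e + 1)) {u..v}"
proof -
  have "((\<lambda>x. (x - (-m)) powr e) has_integral ((-u - -m) powr (e + 1) - (-v - -m) powr (e + 1)) / (e + 1)) {-v..-u}"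
    using assms by (intro has_integral_powr_sub_left) auto
  then show ?thesis
    by (subst has_integral_reflect_real[symmetric]) (simp add: add.commute)
qed

lemma has_integral_abs_powr_sub_between:
  fixes m u v p :: real
  assumes "u \<le> m" "m \<le> v" "-1 < p"
  shows "((\<lambda>x. \<bar>x - m\<bar> powr p) has_integral ((m - u) powr (p + 1) + (v - m) powr (p + 1)) / (p + 1)) {u..v}"
proof -
  have "((\<lambda>x. \<bar>x - m\<bar> powr p) has_integral ((m - u) powr (p + 1) - (m - m) powr (p + 1)) / (p + 1)) {u..m}"
    by (rule has_integral_cong[THEN iffD1, OF _ has_integral_powr_sub_right[of m m u p]])
       (use assms in auto)
  moreover have "((\<lambda>x. \<bar>x - m\<bar> powr p) has_integral ((v - m) powr (p + 1) - (m - m) powr (p + 1)) / (p + 1)) {m..v}"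
    by (rule has_integral_cong[THEN iffD1, OF _ has_integral_powr_sub_left[of m m v p]])
       (use assms in auto)
  ultimately show ?thesis
    using has_integral_combine[OF assms(1,2)] by (simp add: add_divide_distrib)
qed

lemma has_integral_abs_powr_sub_below:
  fixes m u v p :: real
  assumes "u \<le> v" "v \<le> m" "-1 < p"
  shows "((\<lambda>x. \<bar>x - m\<bar> powr p) has_integral ((m - u) powr (p + 1) - (m - v) powr (p + 1)) / (p + 1)) {u..v}"
  by (rule has_integral_cong[THEN iffD1, OF _ has_integral_powr_sub_right[of v m u p]])
     (use assms in auto)

lemma s_convex_onD:
  assumes "s_convex_on s g a b" "x \<in> {a..b}" "y \<in> {a..b}" "0 \<le> t" "t \<le> 1"
  shows "g (t * x + (1 - t) * y) \<le> t powr s * g x + (1 - t) powr s * g y"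
  using assms unfolding s_convex_on_def by auto

lemma s_convex_on_nonneg: "s_convex_on s g a b \<Longrightarrow> x \<in> {a..b} \<Longrightarrow> 0 \<le> g x"
  unfolding s_convex_on_def by auto

lemma s_convex_on_le_endpoints:
  assumes g: "s_convex_on s g a b" and x: "x \<in> {a..b}" and "0 \<le> s"
  shows "g x \<le> g a + g b"
proof (cases "a = b")
  case True
  then show ?thesis using x s_convex_on_nonneg[OF g] by auto
next
  case False
  then have "a < b" using x by auto
  define t where "t = (x - a) / (b - a)"
  have t: "0 \<le> t" "t \<le> 1" using x \<open>a < b\<close> by (auto simp: t_def field_simps)
  have "t * (b - a) = x - a" using \<open>a < b\<close> by (simp add: t_def)
  then have "x = t * b + (1 - t) * a" by (simp add: algebra_simps)
  also have "g \<dots> \<le> t powr s * g b + (1 - t) powr s * g a"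
    using s_convex_onD[OF g _ _ t] x by auto
  also have "\<dots> \<le> 1 * g b + 1 * g a"
    using t assms s_convex_on_nonneg[OF g]
    by (intro add_mono mult_right_mono powr_le1) auto
  finally show ?thesis by simp
qed

lemma s_convex_on_integral_le:
  assumes g: "s_convex_on s g a b" and uv: "a \<le> u" "u \<le> v" "v \<le> b" and "0 < s"
    and gi: "g integrable_on {u..v}"
  shows "integral {u..v} g \<le> (v - u) * (g u + g v) / (s + 1)"
proof (cases "u = v")
  case True
  then show ?thesis by simp
next
  case False
  define d where "d = v - u"
  have d: "0 < d" using False uv by (simp add: d_def)
  define w where "w = (\<lambda>x. (x - u) powr s / d powr s * g v + (v - x) powr s / d powr s * g u)"
  have "((\<lambda>x. (x - u) powr s) has_integral d powr (s + 1) / (s + 1)) {u..v}"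
    using has_integral_powr_sub_left[of u u v s] uv \<open>0 < s\<close> by (simp add: d_def)
  moreover have "((\<lambda>x. (v - x) powr s) has_integral d powr (s + 1) / (s + 1)) {u..v}"
    using has_integral_powr_sub_right[of v v u s] uv \<open>0 < s\<close> by (simp add: d_def)
  ultimately have wi: "(w has_integral d powr (s + 1) / (s + 1) / d powr s * g v
      + d powr (s + 1) / (s + 1) / d powr s * g u) {u..v}"
    unfolding w_def by (intro has_integral_add has_integral_mult_left has_integral_divide)
  have e1: "d powr (s + 1) / (s + 1) / d powr s = d / (s + 1)"
    using d by (simp add: powr_add)
  have e2: "d / (s + 1) * g v + d / (s + 1) * g u = d * (g u + g v) / (s + 1)"
    by (simp add: algebra_simps add_divide_distrib)
  have w: "(w has_integral (v - u) * (g u + g v) / (s + 1)) {u..v}"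
    using wi[unfolded e1 e2] by (simp add: d_def)
  have "g x \<le> w x" if x: "x \<in> {u..v}" for x
  proof -
    define t where "t = (x - u) / d"
    have t: "0 \<le> t" "t \<le> 1" using x d by (auto simp: t_def d_def field_simps)
    have "t * d = x - u" using d by (simp add: t_def)
    then have "x = t * v + (1 - t) * u" by (simp add: d_def algebra_simps)
    also have "g \<dots> \<le> t powr s * g v + (1 - t) powr s * g u"
      using s_convex_onD[OF g _ _ t] uv by auto
    also have "1 - t = (v - x) / d" using d by (simp add: t_def d_def field_simps)
    then have "t powr s * g v + (1 - t) powr s * g u = w x"
      using x d by (simp add: w_def t_def powr_divide)
    finally show ?thesis .
  qed
  then show ?thesis by (rule has_integral_le[OF integrable_integral[OF gi] w])
qed

lemma conjugate_exponent_gt_one: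
  fixes p q :: real
  assumes "1 < q" "1 / p + 1 / q = 1"
  shows "1 < p"
proof -
  have "0 < 1 / q" "1 / q < 1" using assms(1) by auto
  then have "0 < 1 / p" "1 / p < 1" using assms(2) by linarith+
  then show ?thesis by (simp add: zero_less_divide_iff divide_less_eq)
qed

lemma Youngs_inequality_scaled:
  fixes x y X Y p q :: real
  assumes "1 < p" "1 < q" "1 / p + 1 / q = 1" "0 \<le> x" "0 \<le> y" "0 < X" "0 < Y"
  shows "x * y \<le> (x powr p / (p * X) + y powr q / (q * Y)) * (X powr (1 / p) * Y powr (1 / q))"
proof -
  define X' Y' where "X' = X powr (1 / p)" and "Y' = Y powr (1 / q)"
  have pos: "0 < X'" "0 < Y'" using assms by (auto simp: X'_def Y'_def)
  have "(x / X') * (y / Y') \<le> (x / X') powr p / p + (y / Y') powr q / q"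
    by (rule Youngs_inequality) (use assms pos in auto)
  also have "(x / X') powr p = x powr p / X"
    using assms pos by (simp add: powr_divide X'_def powr_powr)
  also have "(y / Y') powr q = y powr q / Y"
    using assms pos by (simp add: powr_divide Y'_def powr_powr)
  finally have "(x / X') * (y / Y') * (X' * Y') \<le> (x powr p / X / p + y powr q / Y / q) * (X' * Y')"
    using pos by (intro mult_right_mono) auto
  then show ?thesis using pos by (simp add: X'_def Y'_def field_simps)
qed

lemma Holder_inequality_integral_le:
  fixes g h :: "real \<Rightarrow> real" and S :: "real set"
  assumes pq: "1 < p" "1 < q" "1 / p + 1 / q = 1"
    and nonneg: "\<And>x. x \<in> S \<Longrightarrow> 0 \<le> g x" "\<And>x. x \<in> S \<Longrightarrow> 0 \<le> h x"
    and gi: "(\<lambda>x. g x powr p) integrable_on S" and hi: "(\<lambda>x. h x powr q) integrable_on S"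
    and ghi: "(\<lambda>x. g x * h x) integrable_on S"
    and X: "0 < X" "integral S (\<lambda>x. g x powr p) \<le> X"
    and Y: "0 < Y" "integral S (\<lambda>x. h x powr q) \<le> Y"
  shows "integral S (\<lambda>x. g x * h x) \<le> X powr (1 / p) * Y powr (1 / q)"
proof -
  define K where "K = X powr (1 / p) * Y powr (1 / q)"
  have "((\<lambda>x. (g x powr p / (p * X) + h x powr q / (q * Y)) * K) has_integral
      (integral S (\<lambda>x. g x powr p) / (p * X) + integral S (\<lambda>x. h x powr q) / (q * Y)) * K) S"
    by (intro has_integral_mult_left has_integral_add has_integral_divide integrable_integral gi hi)
  then have "integral S (\<lambda>x. g x * h x)
      \<le> (integral S (\<lambda>x. g x powr p) / (p * X) + integral S (\<lambda>x. h x powr q) / (q * Y)) * K"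
    by (rule has_integral_le[OF integrable_integral[OF ghi]])
       (use X Y in \<open>auto simp: K_def Youngs_inequality_scaled pq nonneg\<close>)
  also have "\<dots> \<le> (X / (p * X) + Y / (q * Y)) * K"
    using X Y pq by (intro mult_right_mono add_mono divide_right_mono) (auto simp: K_def)
  also have "\<dots> = K" using X Y pq by simp
  finally show ?thesis by (simp add: K_def)
qed

lemma Holder_inequality_integral:
  fixes g h :: "real \<Rightarrow> real" and S :: "real set"
  assumes pq: "1 < p" "1 < q" "1 / p + 1 / q = 1"
    and nonneg: "\<And>x. x \<in> S \<Longrightarrow> 0 \<le> g x" "\<And>x. x \<in> S \<Longrightarrow> 0 \<le> h x"
    and gi: "(\<lambda>x. g x powr p) integrable_on S" and hi: "(\<lambda>x. h x powr q) integrable_on S"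
    and ghi: "(\<lambda>x. g x * h x) integrable_on S"
  shows "integral S (\<lambda>x. g x * h x) \<le>
    integral S (\<lambda>x. g x powr p) powr (1 / p) * integral S (\<lambda>x. h x powr q) powr (1 / q)"
proof -
  define A B where "A = integral S (\<lambda>x. g x powr p)" and "B = integral S (\<lambda>x. h x powr q)"
  have "0 \<le> A" unfolding A_def by (rule integral_nonneg[OF gi]) auto
  have "0 \<le> B" unfolding B_def by (rule integral_nonneg[OF hi]) auto
  have "((\<lambda>e. (A + e) powr (1 / p) * (B + e) powr (1 / q)) \<longlongrightarrow> (A + 0) powr (1 / p) * (B + 0) powr (1 / q))
      (at_right 0)"
    using pq \<open>0 \<le> A\<close> \<open>0 \<le> B\<close>
    by (intro tendsto_mult tendsto_powr' tendsto_intros)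
       (auto intro: eventually_at_rightI[of 0 1])
  moreover have "\<forall>\<^sub>F e in at_right 0. integral S (\<lambda>x. g x * h x) \<le> (A + e) powr (1 / p) * (B + e) powr (1 / q)"
    using \<open>0 \<le> A\<close> \<open>0 \<le> B\<close>
    by (intro eventually_at_rightI[of 0 1] Holder_inequality_integral_le[OF pq nonneg gi hi ghi])
       (auto simp: A_def B_def)
  ultimately show ?thesis
    by (intro tendsto_lowerbound[of _ _ "at_right 0"]) (auto simp: A_def B_def)
qed

lemma has_integral_sub_mult_deriv:
  fixes f f' :: "real \<Rightarrow> real"
  assumes "u \<le> v" and deriv: "\<And>x. x \<in> {u..v} \<Longrightarrow> (f has_real_derivative f' x) (at x)"
  shows "((\<lambda>x. (x - m) * f' x) has_integral (v - m) * f v - (u - m) * f u - integral {u..v} f) {u..v}"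
proof -
  have "continuous_on {u..v} f"
    by (intro continuous_at_imp_continuous_on ballI DERIV_isCont[OF deriv])
  then have fi: "f integrable_on {u..v}" by (rule integrable_continuous_interval)
  have hd: "((\<lambda>x. (x - m) * f x) has_vector_derivative f x + (x - m) * f' x) (at x within {u..v})"
    if "x \<in> {u..v}" for x
  proof -
    have "((\<lambda>x. (x - m) * f x) has_real_derivative 1 * f x + (x - m) * f' x) (at x)"
      using deriv[OF that] by (auto intro!: derivative_eq_intros)
    then show ?thesis
      by (simp add: has_real_derivative_iff_has_vector_derivative[symmetric] has_field_derivative_at_within)
  qed
  have "((\<lambda>x. f x + (x - m) * f' x) has_integral (v - m) * f v - (u - m) * f u) {u..v}"
    using fundamental_theorem_of_calculus[OF \<open>u \<le> v\<close> hd] by simp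
  then have "((\<lambda>x. (f x + (x - m) * f' x) - f x) has_integral
      (v - m) * f v - (u - m) * f u - integral {u..v} f) {u..v}"
    by (intro has_integral_diff integrable_integral fi)
  then show ?thesis by simp
qed

lemma integrable_powr_abs_bounded_deriv:
  fixes f f' :: "real \<Rightarrow> real"
  assumes "u \<le> v" and deriv: "\<And>x. x \<in> {u..v} \<Longrightarrow> (f has_real_derivative f' x) (at x)"
    and bound: "\<And>x. x \<in> {u..v} \<Longrightarrow> \<bar>f' x\<bar> powr q \<le> M"
  shows "(\<lambda>x. \<bar>f' x\<bar> powr q) integrable_on {u..v}"
proof -
  have "f' integrable_on {u..v}"
    using fundamental_theorem_of_calculus[OF \<open>u \<le> v\<close>, of f f'] deriv
    by (auto simp: has_real_derivative_iff_has_vector_derivative[symmetric] has_field_derivative_at_within)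
  then have "f' \<in> borel_measurable (lebesgue_on {u..v})" by (rule integrable_imp_measurable)
  then have "(\<lambda>x. \<bar>f' x\<bar> powr q) \<in> borel_measurable (lebesgue_on {u..v})" by measurable
  then have "(\<lambda>x. \<bar>f' x\<bar> powr q) absolutely_integrable_on {u..v}"
    by (rule measurable_bounded_by_integrable_imp_absolutely_integrable[where g = "\<lambda>_. M"])
       (use bound in auto)
  then show ?thesis by (simp add: absolutely_integrable_on_def)
qed

lemma abs_integral_sub_mult_deriv_le:
  fixes f f' :: "real \<Rightarrow> real"
  assumes deriv: "\<And>x. x \<in> {a..b} \<Longrightarrow> (f has_real_derivative f' x) (at x)"
    and sc: "s_convex_on s (\<lambda>x. \<bar>f' x\<bar> powr q) a b"
    and uv: "a \<le> u" "u \<le> v" "v \<le> b"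
    and pars: "0 < s" "1 < q" "1 < p" "1 / p + 1 / q = 1"
    and K: "((\<lambda>x. \<bar>x - m\<bar> powr p) has_integral K) {u..v}"
  shows "\<bar>integral {u..v} (\<lambda>x. (x - m) * f' x)\<bar>
    \<le> K powr (1 / p) * ((v - u) * (\<bar>f' u\<bar> powr q + \<bar>f' v\<bar> powr q) / (s + 1)) powr (1 / q)"
proof -
  define G where "G = (\<lambda>x. \<bar>f' x\<bar> powr q)"
  define M where "M = G a + G b"
  have derivuv: "\<And>x. x \<in> {u..v} \<Longrightarrow> (f has_real_derivative f' x) (at x)"
    using deriv uv by auto
  have GM: "G x \<le> M" if "x \<in> {u..v}" for x
    unfolding G_def M_def using s_convex_on_le_endpoints[OF sc _ less_imp_le[OF \<open>0 < s\<close>]] that uv by auto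
  have Gi: "G integrable_on {u..v}"
    unfolding G_def by (rule integrable_powr_abs_bounded_deriv[OF \<open>u \<le> v\<close> derivuv GM[unfolded G_def]])
  have f'M: "\<bar>f' x\<bar> \<le> M powr (1 / q)" if "x \<in> {u..v}" for x
  proof -
    have "\<bar>f' x\<bar> = G x powr (1 / q)" using pars by (simp add: G_def powr_powr)
    also have "\<dots> \<le> M powr (1 / q)" using GM[OF that] pars by (intro powr_mono2) (auto simp: G_def)
    finally show ?thesis .
  qed
  note parts = has_integral_sub_mult_deriv[OF \<open>u \<le> v\<close> derivuv, of m]
  have "(\<lambda>x. (x - m) * f' x) absolutely_integrable_on {u..v}"
  proof (rule absolutely_integrable_integrable_bound[where g = "\<lambda>_. (\<bar>u\<bar> + \<bar>v\<bar> + \<bar>m\<bar>) * M powr (1 / q)"])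
    fix x assume x: "x \<in> {u..v}"
    have "\<bar>x - m\<bar> \<le> \<bar>u\<bar> + \<bar>v\<bar> + \<bar>m\<bar>" using x by auto
    then show "norm ((x - m) * f' x) \<le> (\<bar>u\<bar> + \<bar>v\<bar> + \<bar>m\<bar>) * M powr (1 / q)"
      using f'M[OF x] by (simp add: abs_mult mult_mono)
  qed (use parts in auto)
  then have absi: "(\<lambda>x. \<bar>x - m\<bar> * \<bar>f' x\<bar>) integrable_on {u..v}"
    by (simp add: absolutely_integrable_on_def abs_mult)
  have "integral {u..v} G \<le> (v - u) * (G u + G v) / (s + 1)"
    by (rule s_convex_on_integral_le[OF sc[folded G_def] uv \<open>0 < s\<close> Gi])
  moreover have "0 \<le> integral {u..v} G" by (rule integral_nonneg[OF Gi]) (simp add: G_def)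
  ultimately have GI: "integral {u..v} G powr (1 / q) \<le> ((v - u) * (G u + G v) / (s + 1)) powr (1 / q)"
    using pars by (intro powr_mono2) auto
  have "\<bar>integral {u..v} (\<lambda>x. (x - m) * f' x)\<bar> \<le> integral {u..v} (\<lambda>x. \<bar>x - m\<bar> * \<bar>f' x\<bar>)"
    using integral_norm_bound_integral[OF has_integral_integrable[OF parts] absi] by (simp add: abs_mult)
  also have "\<dots> \<le> integral {u..v} (\<lambda>x. \<bar>x - m\<bar> powr p) powr (1 / p) * integral {u..v} G powr (1 / q)"
    unfolding G_def
    by (rule Holder_inequality_integral[OF pars(3,2,4)]) (use K Gi absi in \<open>auto simp: G_def\<close>)
  also have "\<dots> \<le> K powr (1 / p) * ((v - u) * (G u + G v) / (s + 1)) powr (1 / q)"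
    using GI K by (simp add: integral_unique mult_left_mono)
  finally show ?thesis by (simp add: G_def)
qed

lemma has_integral_kernel_left:
  fixes a b \<alpha> lam p :: real
  assumes "a < b" "0 \<le> \<alpha>" "\<alpha> \<le> 1" "0 \<le> lam" "0 < p"
  shows "\<alpha> * lam \<le> 1 - \<alpha> \<Longrightarrow> ((\<lambda>x. \<bar>x - (a + \<alpha> * lam * (b - a))\<bar> powr p) has_integral
      (b - a) powr (p + 1) * eps1 \<alpha> lam p / (p + 1)) {a..\<alpha> * a + (1 - \<alpha>) * b}"
    and "1 - \<alpha> \<le> \<alpha> * lam \<Longrightarrow> ((\<lambda>x. \<bar>x - (a + \<alpha> * lam * (b - a))\<bar> powr p) has_integral
      (b - a) powr (p + 1) * eps2 \<alpha> lam p / (p + 1)) {a..\<alpha> * a + (1 - \<alpha>) * b}"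
proof -
  let ?B = "b - a" and ?c = "\<alpha> * a + (1 - \<alpha>) * b" and ?m = "a + \<alpha> * lam * (b - a)"
  have "0 < ?B" using assms by simp
  have scale: "(?B * t) powr (p + 1) = ?B powr (p + 1) * t powr (p + 1)" if "0 \<le> t" for t
    using \<open>0 < ?B\<close> that by (simp add: powr_mult)
  have ma: "?m - a = ?B * (\<alpha> * lam)" and cm: "?c - ?m = ?B * (1 - \<alpha> - \<alpha> * lam)"
    and mc: "?m - ?c = ?B * (\<alpha> * lam - 1 + \<alpha>)" and ca: "?c - a = ?B * (1 - \<alpha>)"
    by (simp_all add: algebra_simps)
  have "0 \<le> \<alpha> * lam" using assms by simp
  then have "a \<le> ?m" using ma \<open>0 < ?B\<close> by (metis diff_ge_0_iff_ge mult_nonneg_nonneg less_imp_le)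
  have "a \<le> ?c" using ca \<open>0 < ?B\<close> assms by (metis diff_ge_0_iff_ge mult_nonneg_nonneg less_imp_le)
  show "((\<lambda>x. \<bar>x - ?m\<bar> powr p) has_integral ?B powr (p + 1) * eps1 \<alpha> lam p / (p + 1)) {a..?c}"
    if "\<alpha> * lam \<le> 1 - \<alpha>"
  proof (rule has_integral_eq_rhs[OF has_integral_abs_powr_sub_between])
    have "0 \<le> 1 - \<alpha> - \<alpha> * lam" using that by simp
    then show "?m \<le> ?c" using cm \<open>0 < ?B\<close> by (metis diff_ge_0_iff_ge mult_nonneg_nonneg less_imp_le)
    show "?B powr (p + 1) * eps1 \<alpha> lam p / (p + 1) = ((?m - a) powr (p + 1) + (?c - ?m) powr (p + 1)) / (p + 1)"
      unfolding ma cm eps1_def scale[OF \<open>0 \<le> \<alpha> * lam\<close>] scale[OF \<open>0 \<le> 1 - \<alpha> - \<alpha> * lam\<close>]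
      by (simp add: distrib_left)
  qed (use \<open>a \<le> ?m\<close> assms in auto)
  show "((\<lambda>x. \<bar>x - ?m\<bar> powr p) has_integral ?B powr (p + 1) * eps2 \<alpha> lam p / (p + 1)) {a..?c}"
    if "1 - \<alpha> \<le> \<alpha> * lam"
  proof (rule has_integral_eq_rhs[OF has_integral_abs_powr_sub_below])
    have "0 \<le> \<alpha> * lam - 1 + \<alpha>" using that by simp
    then show "?c \<le> ?m" using mc \<open>0 < ?B\<close> by (metis diff_ge_0_iff_ge mult_nonneg_nonneg less_imp_le)
    show "?B powr (p + 1) * eps2 \<alpha> lam p / (p + 1) = ((?m - a) powr (p + 1) - (?m - ?c) powr (p + 1)) / (p + 1)"
      unfolding ma mc eps2_def scale[OF \<open>0 \<le> \<alpha> * lam\<close>] scale[OF \<open>0 \<le> \<alpha> * lam - 1 + \<alpha>\<close>]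
      by (simp add: right_diff_distrib)
  qed (use \<open>a \<le> ?c\<close> assms in auto)
qed

lemma has_integral_kernel_right:
  fixes a b \<alpha> lam p :: real
  assumes "a < b" "0 \<le> \<alpha>" "\<alpha> \<le> 1" "0 \<le> lam" "0 < p"
  shows "1 - \<alpha> \<le> 1 - lam * (1 - \<alpha>) \<Longrightarrow> ((\<lambda>x. \<bar>x - (b - lam * (1 - \<alpha>) * (b - a))\<bar> powr p) has_integral
      (b - a) powr (p + 1) * eps1 (1 - \<alpha>) lam p / (p + 1)) {\<alpha> * a + (1 - \<alpha>) * b..b}"
    and "1 - lam * (1 - \<alpha>) \<le> 1 - \<alpha> \<Longrightarrow> ((\<lambda>x. \<bar>x - (b - lam * (1 - \<alpha>) * (b - a))\<bar> powr p) has_integral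
      (b - a) powr (p + 1) * eps2 (1 - \<alpha>) lam p / (p + 1)) {\<alpha> * a + (1 - \<alpha>) * b..b}"
proof -
  \<comment> \<open>The reflection \<open>x \<mapsto> -x\<close> turns the right piece into the left piece for \<open>-b, -a, 1 - \<alpha>\<close>.\<close>
  have reflect: "((\<lambda>x. \<bar>x - (b - lam * (1 - \<alpha>) * (b - a))\<bar> powr p) has_integral i) {\<alpha> * a + (1 - \<alpha>) * b..b}"
    if "((\<lambda>x. \<bar>x - (-b + (1 - \<alpha>) * lam * (-a - -b))\<bar> powr p) has_integral i) {-b..(1 - \<alpha>) * -b + (1 - (1 - \<alpha>)) * -a}"
    for i
  proof -
    have "\<bar>- x - (b - lam * (1 - \<alpha>) * (b - a))\<bar> = \<bar>x - (-b + (1 - \<alpha>) * lam * (-a - -b))\<bar>" for x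
      by (subst abs_minus_cancel[symmetric]) (simp add: algebra_simps)
    then show ?thesis
      using that by (subst has_integral_reflect_real[symmetric]) (simp add: algebra_simps)
  qed
  note left = has_integral_kernel_left[of "-b" "-a" "1 - \<alpha>" lam p]
  show "1 - \<alpha> \<le> 1 - lam * (1 - \<alpha>) \<Longrightarrow> ((\<lambda>x. \<bar>x - (b - lam * (1 - \<alpha>) * (b - a))\<bar> powr p) has_integral
      (b - a) powr (p + 1) * eps1 (1 - \<alpha>) lam p / (p + 1)) {\<alpha> * a + (1 - \<alpha>) * b..b}"
    using left(1) assms by (intro reflect) (simp add: algebra_simps)
  show "1 - lam * (1 - \<alpha>) \<le> 1 - \<alpha> \<Longrightarrow> ((\<lambda>x. \<bar>x - (b - lam * (1 - \<alpha>) * (b - a))\<bar> powr p) has_integral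
      (b - a) powr (p + 1) * eps2 (1 - \<alpha>) lam p / (p + 1)) {\<alpha> * a + (1 - \<alpha>) * b..b}"
    using left(2) assms by (intro reflect) (simp add: algebra_simps)
qed

lemma I_f_eq_sum_integrals:
  fixes f f' :: "real \<Rightarrow> real"
  assumes deriv: "\<forall>x\<in>{a..b}. (f has_real_derivative f' x) (at x)"
    and "a < b" "0 \<le> \<alpha>" "\<alpha> \<le> 1"
  shows "(b - a) * I_f f lam \<alpha> a b =
    integral {a..\<alpha> * a + (1 - \<alpha>) * b} (\<lambda>x. (x - (a + \<alpha> * lam * (b - a))) * f' x)
    + integral {\<alpha> * a + (1 - \<alpha>) * b..b} (\<lambda>x. (x - (b - lam * (1 - \<alpha>) * (b - a))) * f' x)"
proof -
  let ?c = "\<alpha> * a + (1 - \<alpha>) * b" and ?m1 = "a + \<alpha> * lam * (b - a)" and ?m2 = "b - lam * (1 - \<alpha>) * (b - a)"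
  have "?c - a = (1 - \<alpha>) * (b - a)" "b - ?c = \<alpha> * (b - a)" by (simp_all add: algebra_simps)
  then have "a \<le> ?c" "?c \<le> b" using assms by (metis diff_ge_0_iff_ge mult_nonneg_nonneg less_imp_le)+
  have "integral {a..?c} (\<lambda>x. (x - ?m1) * f' x) = (?c - ?m1) * f ?c - (a - ?m1) * f a - integral {a..?c} f"
    using deriv \<open>a \<le> ?c\<close> \<open>?c \<le> b\<close> by (intro integral_unique has_integral_sub_mult_deriv) auto
  moreover have "integral {?c..b} (\<lambda>x. (x - ?m2) * f' x) = (b - ?m2) * f b - (?c - ?m2) * f ?c - integral {?c..b} f"
    using deriv \<open>a \<le> ?c\<close> \<open>?c \<le> b\<close> by (intro integral_unique has_integral_sub_mult_deriv) auto
  moreover have "integral {a..?c} f + integral {?c..b} f = integral {a..b} f"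
  proof (rule Henstock_Kurzweil_Integration.integral_combine[OF \<open>a \<le> ?c\<close> \<open>?c \<le> b\<close>])
    show "f integrable_on {a..b}"
      using deriv by (intro integrable_continuous_interval continuous_at_imp_continuous_on ballI DERIV_isCont) auto
  qed
  moreover have "(b - a) * I_f f lam \<alpha> a b =
      (b - a) * (lam * (\<alpha> * f a + (1 - \<alpha>) * f b) + (1 - lam) * f ?c) - integral {a..b} f"
    using \<open>a < b\<close> by (simp add: I_f_def right_diff_distrib)
  ultimately show ?thesis by (simp add: algebra_simps)
qed

lemma Holder_bound_rescale:
  fixes B E X p q s :: real
  assumes "0 < B" "0 \<le> E" "0 \<le> X" "0 < p" "0 < q" "0 < s" "1 / p + 1 / q = 1"
  shows "(B powr (p + 1) * E / (p + 1)) powr (1 / p) * (B * X / (s + 1)) powr (1 / q) / B =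
    B * (1 / (p + 1)) powr (1 / p) * (1 / (s + 1)) powr (1 / q) * (E powr (1 / p) * X powr (1 / q))"
proof -
  have "(B powr (p + 1) * E / (p + 1)) powr (1 / p) = B powr ((p + 1) / p) * E powr (1 / p) * (1 / (p + 1)) powr (1 / p)"
    using assms by (simp add: powr_mult powr_divide powr_powr)
  moreover have "(B * X / (s + 1)) powr (1 / q) = B powr (1 / q) * X powr (1 / q) * (1 / (s + 1)) powr (1 / q)"
    using assms by (simp add: powr_mult powr_divide)
  moreover have "(p + 1) / p + 1 / q = 2" using assms by (simp add: add_divide_distrib)
  then have "B powr ((p + 1) / p) * B powr (1 / q) = B * B"
    using assms by (simp add: powr_add[symmetric] power2_eq_square)
  ultimately show ?thesis using assms by (simp add: field_simps)
qed

lemma abs_I_f_le: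
  fixes f f' :: "real \<Rightarrow> real"
  assumes deriv: "\<forall>x\<in>{a..b}. (f has_real_derivative f' x) (at x)"
    and sc: "s_convex_on s (\<lambda>x. \<bar>f' x\<bar> powr q) a b"
    and "a < b" "0 \<le> \<alpha>" "\<alpha> \<le> 1"
    and pars: "0 < s" "1 < q" "1 < p" "1 / p + 1 / q = 1"
    and K1: "((\<lambda>x. \<bar>x - (a + \<alpha> * lam * (b - a))\<bar> powr p) has_integral
      (b - a) powr (p + 1) * E1 / (p + 1)) {a..\<alpha> * a + (1 - \<alpha>) * b}"
    and K2: "((\<lambda>x. \<bar>x - (b - lam * (1 - \<alpha>) * (b - a))\<bar> powr p) has_integral
      (b - a) powr (p + 1) * E2 / (p + 1)) {\<alpha> * a + (1 - \<alpha>) * b..b}"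
  shows "\<bar>I_f f lam \<alpha> a b\<bar> \<le> (b - a) * (1 / (p + 1)) powr (1 / p) * (1 / (s + 1)) powr (1 / q) *
    (E1 powr (1 / p) * C_f f' a b \<alpha> q powr (1 / q) + E2 powr (1 / p) * D_f f' a b \<alpha> q powr (1 / q))"
proof -
  let ?B = "b - a" and ?c = "\<alpha> * a + (1 - \<alpha>) * b" and ?G = "\<lambda>x. \<bar>f' x\<bar> powr q"
  have "0 < ?B" using \<open>a < b\<close> by simp
  have ca: "?c - a = ?B * (1 - \<alpha>)" and bc: "b - ?c = ?B * \<alpha>" by (simp_all add: algebra_simps)
  then have "a \<le> ?c" "?c \<le> b" using assms by (metis diff_ge_0_iff_ge mult_nonneg_nonneg less_imp_le)+
  have E_nonneg: "0 \<le> E" if "((\<lambda>x. \<bar>x - m\<bar> powr p) has_integral ?B powr (p + 1) * E / (p + 1)) S" for m E S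
  proof -
    have "0 \<le> ?B powr (p + 1) * E / (p + 1)" by (rule has_integral_nonneg[OF that]) simp
    then show ?thesis using \<open>0 < ?B\<close> pars by (simp add: zero_le_mult_iff zero_le_divide_iff)
  qed
  have "(1 - \<alpha>) * b + \<alpha> * a = ?c" by simp
  then have C: "(?c - a) * (?G a + ?G ?c) = ?B * C_f f' a b \<alpha> q"
    and D: "(b - ?c) * (?G ?c + ?G b) = ?B * D_f f' a b \<alpha> q"
    unfolding ca bc C_f_def D_f_def by (simp_all add: algebra_simps)
  have "0 \<le> C_f f' a b \<alpha> q" "0 \<le> D_f f' a b \<alpha> q" using assms by (simp_all add: C_f_def D_f_def)
  have p: "0 < p" and q: "0 < q" using pars by simp_all
  have "\<bar>I_f f lam \<alpha> a b\<bar> * ?B = \<bar>?B * I_f f lam \<alpha> a b\<bar>"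
    using \<open>0 < ?B\<close> by (simp add: abs_mult)
  also have "\<dots> \<le> \<bar>integral {a..?c} (\<lambda>x. (x - (a + \<alpha> * lam * (b - a))) * f' x)\<bar>
        + \<bar>integral {?c..b} (\<lambda>x. (x - (b - lam * (1 - \<alpha>) * (b - a))) * f' x)\<bar>"
    unfolding I_f_eq_sum_integrals[OF deriv \<open>a < b\<close> \<open>0 \<le> \<alpha>\<close> \<open>\<alpha> \<le> 1\<close>] by (rule abs_triangle_ineq)
  also have "\<dots> \<le> (?B powr (p + 1) * E1 / (p + 1)) powr (1 / p) * (?B * C_f f' a b \<alpha> q / (s + 1)) powr (1 / q)
      + (?B powr (p + 1) * E2 / (p + 1)) powr (1 / p) * (?B * D_f f' a b \<alpha> q / (s + 1)) powr (1 / q)"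
    unfolding C[symmetric] D[symmetric] using deriv \<open>a \<le> ?c\<close> \<open>?c \<le> b\<close> by (intro add_mono abs_integral_sub_mult_deriv_le[OF _ sc _ _ _ pars K1]
        abs_integral_sub_mult_deriv_le[OF _ sc _ _ _ pars K2]) auto
  finally have "\<bar>I_f f lam \<alpha> a b\<bar> \<le> \<dots> / ?B"
    using \<open>0 < ?B\<close> by (simp add: pos_le_divide_eq)
  also have "\<dots> = ?B * (1 / (p + 1)) powr (1 / p) * (1 / (s + 1)) powr (1 / q) *
    (E1 powr (1 / p) * C_f f' a b \<alpha> q powr (1 / q) + E2 powr (1 / p) * D_f f' a b \<alpha> q powr (1 / q))"
    unfolding add_divide_distrib
      Holder_bound_rescale[OF \<open>0 < ?B\<close> E_nonneg[OF K1] \<open>0 \<le> C_f f' a b \<alpha> q\<close> p q \<open>0 < s\<close> pars(4)]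
      Holder_bound_rescale[OF \<open>0 < ?B\<close> E_nonneg[OF K2] \<open>0 \<le> D_f f' a b \<alpha> q\<close> p q \<open>0 < s\<close> pars(4)]
    by (simp only: distrib_left)
  finally show ?thesis .
qed

theorem theorem2p3:
  fixes I :: "real set" and f f' :: "real \<Rightarrow> real"
    and a b \<alpha> lam s q p :: real
  assumes "is_interval I"
    and "\<forall>x\<in>interior I. (f has_real_derivative f' x) (at x)"
    and "a \<in> interior I" and "b \<in> interior I" and "a < b"
    and "set_integrable lborel {a..b} f'"
    and "\<alpha> \<in> {0..1}" and "lam \<in> {0..1}"
    and "0 < s" and "s \<le> 1" and "1 < q"
    and "s_convex_on s (\<lambda>x. \<bar>f' x\<bar> powr q) a b"
    and "1 / p + 1 / q = 1"
  shows
    "(\<alpha> * lam \<le> 1 - \<alpha> \<and> 1 - \<alpha> \<le> 1 - lam * (1 - \<alpha>) \<longrightarrow>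
       \<bar>I_f f lam \<alpha> a b\<bar> \<le> (b - a) * (1 / (p + 1)) powr (1 / p) * (1 / (s + 1)) powr (1 / q) *
         (eps1 \<alpha> lam p powr (1 / p) * C_f f' a b \<alpha> q powr (1 / q)
          + eps1 (1 - \<alpha>) lam p powr (1 / p) * D_f f' a b \<alpha> q powr (1 / q))) \<and>
     (\<alpha> * lam \<le> 1 - lam * (1 - \<alpha>) \<and> 1 - lam * (1 - \<alpha>) \<le> 1 - \<alpha> \<longrightarrow>
       \<bar>I_f f lam \<alpha> a b\<bar> \<le> (b - a) * (1 / (p + 1)) powr (1 / p) * (1 / (s + 1)) powr (1 / q) *
         (eps1 \<alpha> lam p powr (1 / p) * C_f f' a b \<alpha> q powr (1 / q)
          + eps2 (1 - \<alpha>) lam p powr (1 / p) * D_f f' a b \<alpha> q powr (1 / q))) \<and>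
     (1 - \<alpha> \<le> \<alpha> * lam \<and> \<alpha> * lam \<le> 1 - lam * (1 - \<alpha>) \<longrightarrow>
       \<bar>I_f f lam \<alpha> a b\<bar> \<le> (b - a) * (1 / (p + 1)) powr (1 / p) * (1 / (s + 1)) powr (1 / q) *
         (eps2 \<alpha> lam p powr (1 / p) * C_f f' a b \<alpha> q powr (1 / q)
          + eps1 (1 - \<alpha>) lam p powr (1 / p) * D_f f' a b \<alpha> q powr (1 / q)))"
proof -
  have "is_interval (interior I)"
    using assms(1) by (simp add: is_interval_convex_1)
  then have deriv: "\<forall>x\<in>{a..b}. (f has_real_derivative f' x) (at x)"
    using assms(2) mem_is_interval_1_I[OF _ assms(3,4)] by auto
  have "1 < p" using conjugate_exponent_gt_one[OF assms(11,13)] .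
  then have "0 < p" by simp
  have "0 \<le> \<alpha>" "\<alpha> \<le> 1" "0 \<le> lam" using assms(7,8) by auto
  note bound = abs_I_f_le[OF deriv assms(12,5) \<open>0 \<le> \<alpha>\<close> \<open>\<alpha> \<le> 1\<close> assms(9,11) \<open>1 < p\<close> assms(13)]
  note left = has_integral_kernel_left[OF \<open>a < b\<close> \<open>0 \<le> \<alpha>\<close> \<open>\<alpha> \<le> 1\<close> \<open>0 \<le> lam\<close> \<open>0 < p\<close>]
    and right = has_integral_kernel_right[OF \<open>a < b\<close> \<open>0 \<le> \<alpha>\<close> \<open>\<alpha> \<le> 1\<close> \<open>0 \<le> lam\<close> \<open>0 < p\<close>]
  show ?thesis
    using bound[OF left(1) right(1)] bound[OF left(1) right(2)] bound[OF left(2) right(1)]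
    by (blast intro: order_trans)
qed

end
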